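(* Consider the Boosted HiPPA setting described in the context, with $\gamma>0$, $\sigma\in(0,\frac1{p\gamma})$, $\vartheta\in(0,1)$, and let $x^k$ be an iterate generated by the algorithm, with direction $d^k\in\mathbb{R}^n$. If $P_k(x^k)\neq x^k$, then there exists $\bar m\in\mathbb{N}_0$ such that, with $\alpha_k=\vartheta^{\bar m}$ and $\hat x^{k+1}=(1-\alpha_k)P_k(x^k)+\alpha_k(x^k+d^k)$, the inequality $$\varphi^{p,\varepsilon_{k+1}}_\gamma(\hat x^{k+1})\le\varphi^{p,\varepsilon_k}_\gamma(x^k)-\sigma\|R^{\varepsilon_k}_\gamma(x^k)\|^p+\varepsilon_k+\varepsilon_{k+1}$$ holds; consequently the backtracking loop terminates after finitely many steps.
   Context: Standing setting. $p>1$; $\varphi:\mathbb{R}^n\to\mathbb{R}\cup\{+\infty\}$ is proper, lsc and bounded from below. For $\gamma>0$: $\operatorname{prox}^p_{\gamma\varphi}(x):=\operatorname{argmin}_y\big(\varphi(y)+\frac1{p\gamma}\|x-y\|^p\big)$, $\varphi^p_\gamma(x):=\inf_y\big(\varphi(y)+\frac1{p\gamma}\|x-y\|^p\big)$. $\{\varepsilon_k\}_{k\ge0},\{\delta_k\}_{k\ge0}$ are non-increasing sequences of positive scalars with $\sum_k\varepsilon_k<\infty$ and $\delta_k\downarrow0$. Prox approximation: for each index $j$ and each point $x$ needed by the algorithm, a point $P_j(x)$ (written $\operatorname{prox}^{p,\varepsilon_j}_{\gamma\varphi}(x)$) is available with $\operatorname{dist}(P_j(x),\operatorname{prox}^p_{\gamma\varphi}(x))<\delta_j$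 and $\varphi(P_j(x))+\frac1{p\gamma}\|x-P_j(x)\|^p<\varphi^p_\gamma(x)+\varepsilon_j$. Define $\varphi^{p,\varepsilon_j}_\gamma(x):=\varphi(P_j(x))+\frac1{p\gamma}\|x-P_j(x)\|^p$ and $R^{\varepsilon_j}_\gamma(x):=x-P_j(x)$. Boosted HiPPA: choose $x^0$, $\gamma>0$, $\sigma\in(0,\frac1{p\gamma})$, $\vartheta\in(0,1)$. At iteration $k$: set $\bar x^k:=P_k(x^k)$; choose a direction $d^k\in\mathbb{R}^n$ (not necessarily a descent direction); for $m=0,1,2,\dots$ set $\alpha_k=\vartheta^m$, $\hat x^{k+1}=(1-\alpha_k)\bar x^k+\alpha_k(x^k+d^k)$, until $\varphi^{p,\varepsilon_{k+1}}_\gamma(\hat x^{k+1})\le\varphi^{p,\varepsilon_k}_\gamma(x^k)-\sigma\|R^{\varepsilon_k}_\gamma(x^k)\|^p+\varepsilon_k+\varepsilon_{k+1}$; then set $x^{k+1}=\hat x^{k+1}$. *)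

theory Defs
  imports "HOL-Analysis.Analysis"
begin

definition lsc :: "('a::topological_space \<Rightarrow> ereal) \<Rightarrow> bool" where
  "lsc f \<longleftrightarrow> (\<forall>x. f x \<le> Liminf (at x) f)"

definition ppen :: "real \<Rightarrow> real \<Rightarrow> 'a::real_normed_vector \<Rightarrow> 'a \<Rightarrow> real" where
  "ppen p \<gamma> x y = norm (x - y) powr p / (p * \<gamma>)"

definition moreau_env :: "real \<Rightarrow> real \<Rightarrow> ('a::real_normed_vector \<Rightarrow> ereal) \<Rightarrow> 'a \<Rightarrow> ereal" where
  "moreau_env p \<gamma> \<phi> x = (INF y. \<phi> y + ereal (ppen p \<gamma> x y))"

definition hprox :: "real \<Rightarrow> real \<Rightarrow> ('a::real_normed_vector \<Rightarrow> ereal) \<Rightarrow> 'a \<Rightarrow> 'a set" where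
  "hprox p \<gamma> \<phi> x = {y. \<forall>z. \<phi> y + ereal (ppen p \<gamma> x y) \<le> \<phi> z + ereal (ppen p \<gamma> x z)}"

definition approx_env :: "real \<Rightarrow> real \<Rightarrow> ('a::real_normed_vector \<Rightarrow> ereal) \<Rightarrow> (nat \<Rightarrow> 'a \<Rightarrow> 'a) \<Rightarrow> nat \<Rightarrow> 'a \<Rightarrow> ereal" where
  "approx_env p \<gamma> \<phi> P j x = \<phi> (P j x) + ereal (ppen p \<gamma> x (P j x))"

definition resid :: "(nat \<Rightarrow> 'a \<Rightarrow> 'a) \<Rightarrow> nat \<Rightarrow> 'a \<Rightarrow> 'a::real_normed_vector" where
  "resid P j x = x - P j x"

end

theory Submission
  imports Defs
begin

text \<open>Since the oracle value at any point z is below the envelope plus \<epsilon>, comparing with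
  the candidate y = P k x gives the bound \<phi>(P k x) + ppen(z, P k x) + \<epsilon>(k+1) for the new
  approximate envelope. The old one, after the sufficient decrease term is subtracted, is at
  least \<phi>(P k x) because \<sigma> \<le> 1/(p\<gamma>). As \<alpha> = \<theta>^m \<rightarrow> 0 the trial point tends to
  P k x, so ppen(z, P k x) eventually drops below \<epsilon> k > 0, which is all the slack needed.\<close>

lemma moreau_env_le: "moreau_env p \<gamma> \<phi> x \<le> \<phi> y + ereal (ppen p \<gamma> x y)"
  unfolding moreau_env_def by (rule INF_lower) simp

lemma approx_env_le_via_point:
  assumes "approx_env p \<gamma> \<phi> P j z < moreau_env p \<gamma> \<phi> z + ereal e"
  shows "approx_env p \<gamma> \<phi> P j z \<le> \<phi> y + ereal (ppen p \<gamma> z y + e)"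
proof -
  have "moreau_env p \<gamma> \<phi> z + ereal e \<le> \<phi> y + ereal (ppen p \<gamma> z y) + ereal e"
    using moreau_env_le by (rule add_right_mono)
  with assms show ?thesis
    by (simp add: add.assoc)
qed

lemma scaled_powr_le_ppen:
  assumes "\<sigma> \<le> 1 / (p * \<gamma>)"
  shows "\<sigma> * norm (x - y) powr p \<le> ppen p \<gamma> x y"
proof -
  have "\<sigma> * norm (x - y) powr p \<le> 1 / (p * \<gamma>) * norm (x - y) powr p"
    using assms by (intro mult_right_mono) auto
  then show ?thesis
    unfolding ppen_def by simp
qed

lemma ppen_tendsto_zero:
  assumes "(f \<longlongrightarrow> y) F" and "p > 0"
  shows "((\<lambda>t. ppen p \<gamma> (f t) y) \<longlongrightarrow> 0) F"
proof -
  have "((\<lambda>t. norm (f t - y)) \<longlongrightarrow> 0) F"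
    using tendsto_norm_zero [OF LIM_zero [OF assms(1)]] .
  then have "((\<lambda>t. norm (f t - y) powr p) \<longlongrightarrow> 0) F"
    by (rule tendsto_zero_powrI) (use assms(2) in auto)
  then show ?thesis
    unfolding ppen_def by (rule tendsto_divide_zero)
qed

lemma convex_comb_power_tendsto:
  fixes a b :: "'a::real_normed_vector"
  assumes "0 < \<theta>" "\<theta> < 1"
  shows "(\<lambda>m. (1 - \<theta> ^ m) *\<^sub>R a + \<theta> ^ m *\<^sub>R b) \<longlonglongrightarrow> a"
proof -
  have "(\<lambda>m. \<theta> ^ m) \<longlonglongrightarrow> 0"
    using assms by (intro LIMSEQ_power_zero) auto
  then have "(\<lambda>m. (1 - \<theta> ^ m) *\<^sub>R a + \<theta> ^ m *\<^sub>R b) \<longlonglongrightarrow> (1 - 0) *\<^sub>R a + 0 *\<^sub>R b"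
    by (intro tendsto_add tendsto_scaleR tendsto_diff tendsto_const)
  then show ?thesis
    by simp
qed

theorem theorem9:
  fixes \<phi> :: "'a::euclidean_space \<Rightarrow> ereal"
    and p \<gamma> \<sigma> \<theta> :: real
    and \<epsilon> \<delta> :: "nat \<Rightarrow> real"
    and P :: "nat \<Rightarrow> 'a \<Rightarrow> 'a"
    and k :: nat and x d :: 'a
  assumes p: "p > 1"
    and proper: "\<forall>y. \<phi> y \<noteq> -\<infinity>" "\<exists>y. \<phi> y \<noteq> \<infinity>"
    and lsc: "lsc \<phi>"
    and bdd: "\<exists>b::real. \<forall>y. ereal b \<le> \<phi> y"
    and eps: "\<forall>j. \<epsilon> j > 0" "antimono \<epsilon>" "summable \<epsilon>"
    and dlt: "\<forall>j. \<delta> j > 0" "antimono \<delta>" "\<delta> \<longlonglongrightarrow> 0"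
    and P_dist: "\<forall>j y. infdist (P j y) (hprox p \<gamma> \<phi> y) < \<delta> j"
    and P_val: "\<forall>j y. approx_env p \<gamma> \<phi> P j y < moreau_env p \<gamma> \<phi> y + ereal (\<epsilon> j)"
    and gamma: "\<gamma> > 0"
    and sigma: "0 < \<sigma>" "\<sigma> < 1 / (p * \<gamma>)"
    and theta: "0 < \<theta>" "\<theta> < 1"
    and neq: "P k x \<noteq> x"
  shows "\<exists>m::nat. let \<alpha> = \<theta> ^ m;
                      xh = (1 - \<alpha>) *\<^sub>R P k x + \<alpha> *\<^sub>R (x + d)
                  in approx_env p \<gamma> \<phi> P (Suc k) xh
                     \<le> approx_env p \<gamma> \<phi> P k x - ereal (\<sigma> * norm (resid P k x) powr p)
                       + ereal (\<epsilon> k) + ereal (\<epsilon> (Suc k))"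
proof -
  define xb where "xb = P k x"
  define xh where "xh m = (1 - \<theta> ^ m) *\<^sub>R xb + \<theta> ^ m *\<^sub>R (x + d)" for m
  have "(\<lambda>m. ppen p \<gamma> (xh m) xb) \<longlonglongrightarrow> 0"
    unfolding xh_def using convex_comb_power_tendsto [OF theta] p
    by (intro ppen_tendsto_zero) auto
  then obtain m where m: "ppen p \<gamma> (xh m) xb < \<epsilon> k"
    using eps(1) by (metis order_tendstoD(2) eventually_sequentially order_refl)
  have "approx_env p \<gamma> \<phi> P (Suc k) (xh m) \<le> \<phi> xb + ereal (ppen p \<gamma> (xh m) xb + \<epsilon> (Suc k))"
    using P_val by (intro approx_env_le_via_point) blast
  also have "\<dots> \<le> \<phi> xb + ereal (ppen p \<gamma> x xb - \<sigma> * norm (x - xb) powr p + \<epsilon> k + \<epsilon> (Suc k))"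
    using m scaled_powr_le_ppen [of \<sigma> p \<gamma> x xb] sigma(2) by (intro add_left_mono) simp
  also have "\<dots> = approx_env p \<gamma> \<phi> P k x - ereal (\<sigma> * norm (resid P k x) powr p)
                   + ereal (\<epsilon> k) + ereal (\<epsilon> (Suc k))"
    unfolding approx_env_def resid_def xb_def by (cases "\<phi> (P k x)") simp_all
  finally show ?thesis
    unfolding xh_def xb_def Let_def by blast
qed

end
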